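(* Let $k>0$, $\theta>0$, and let $X_1,\dots,X_n$ be i.i.d. samples of a gamma random variable $X$ with pdf $f(x)=\frac{x^{k-1}}{\Gamma(k)\theta^k}\exp(-x/\theta)$ for $0<x<\infty$. Let $\overline{X}_n=\frac1n\sum_{i=1}^nX_i$ and $\varDelta=\min\big\{\frac12,\frac{\mathscr{C}}{\sqrt n}(3+\frac6k)^{3/4}\big\}$, where $\mathscr{C}$ is the Berry–Esseen constant. Then $$\Pr\{\overline{X}_n\le\varrho k\theta\}\le\Big(\frac12+\varDelta\Big)\big[\varrho\exp(1-\varrho)\big]^{kn}\quad\text{for }0<\varrho\le1,$$ $$\Pr\{\overline{X}_n\ge\varrho k\theta\}\le\Big(\frac12+\varDelta\Big)\big[\varrho\exp(1-\varrho)\big]^{kn}\quad\text{for }\varrho\ge1.$$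
   Context: The Berry–Esseen constant $\mathscr{C}$ is a positive absolute constant such that for every random variable $Y$ with $\mathbb{E}[Y]=0$, $\mathbb{E}[Y^2]>0$, $\mathbb{E}[|Y|^3]<\infty$, every $n$ and every $y\in\mathbb{R}$, $|F_n(y)-\Phi(y)|\le\frac{\mathscr{C}}{\sqrt n}\frac{\mathbb{E}[|Y|^3]}{\mathbb{E}^{3/2}[Y^2]}$, where $F_n$ is the cdf of $\sum_{i=1}^nY_i/\sqrt{n\mathbb{E}[Y^2]}$ for i.i.d. copies $Y_i$ of $Y$ and $\Phi$ is the standard normal cdf. *)

theory Defs
  imports "HOL-Probability.Probability"
begin

definition gamma_density :: "real \<Rightarrow> real \<Rightarrow> real \<Rightarrow> real" where
  "gamma_density k \<theta> x =
     (if 0 < x then x powr (k - 1) / (Gamma k * \<theta> powr k) * exp (- x / \<theta>) else 0)"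

definition std_normal_cdf :: "real \<Rightarrow> real" where
  "std_normal_cdf y = measure (density lborel (\<lambda>x. ennreal (std_normal_density x))) {..y}"

definition berry_esseen_const :: "real \<Rightarrow> bool" where
  "berry_esseen_const C \<longleftrightarrow> 0 < C \<and>
    (\<forall>N :: real measure. prob_space N \<longrightarrow> sets N = sets borel \<longrightarrow>
       integrable N (\<lambda>y. \<bar>y\<bar> ^ 3) \<longrightarrow>
       integral\<^sup>L N (\<lambda>y. y) = 0 \<longrightarrow>
       0 < integral\<^sup>L N (\<lambda>y. y\<^sup>2) \<longrightarrow>
       (\<forall>n::nat. n \<ge> 1 \<longrightarrow> (\<forall>y::real.
          \<bar>measure (PiM {..<n} (\<lambda>_. N))
              {\<omega> \<in> space (PiM {..<n} (\<lambda>_. N)).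
                 (\<Sum>i<n. \<omega> i) / sqrt (real n * integral\<^sup>L N (\<lambda>y. y\<^sup>2)) \<le> y}
            - std_normal_cdf y\<bar>
          \<le> C / sqrt (real n) * integral\<^sup>L N (\<lambda>y. \<bar>y\<bar> ^ 3)
               / (integral\<^sup>L N (\<lambda>y. y\<^sup>2)) powr (3/2))))"

end

(* Exponential tilting: the Gamma(k, theta) density is rho^k exp((1 - rho) x / (rho theta)) times the
   Gamma(k, rho theta) density, so on the event that the sum S of the samples lies below nk rho theta
   (above it, if rho >= 1) the joint density of the sample is at most (rho exp(1 - rho))^(kn) times the
   joint density under scale rho theta.  Under the tilted law that event says that S lies on one side of
   its mean, which by the Berry-Esseen bound at 0 has probability at most
   1/2 + C n^(-1/2) E|Y|^3 / (E Y^2)^(3/2) for the centred summand Y.  From the Gamma central moments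
   E Y^2 = k theta^2 and E Y^4 = (3k^2 + 6k) theta^4, Cauchy-Schwarz bounds this ratio by
   (3 + 6/k)^(1/2) <= (3 + 6/k)^(3/4); the trivial bound 1 on the probability gives the cap 1/2. *)

theory Submission
  imports Defs
begin

abbreviation gamma_distribution :: "real \<Rightarrow> real \<Rightarrow> real measure" where
  "gamma_distribution k \<theta> \<equiv> density lborel (\<lambda>x. ennreal (gamma_density k \<theta> x))"

lemma gamma_density_nonneg: "0 < k \<Longrightarrow> 0 < \<theta> \<Longrightarrow> 0 \<le> gamma_density k \<theta> x"
  by (auto simp: gamma_density_def intro!: divide_nonneg_nonneg mult_nonneg_nonneg Gamma_real_nonneg)

lemma gamma_density_measurable[measurable]: "gamma_density k \<theta> \<in> borel_measurable borel"
  unfolding gamma_density_def by measurable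

lemma nn_integral_Gamma_real:
  assumes "0 < a"
  shows "(\<integral>\<^sup>+t. ennreal (if 0 < t then t powr (a - 1) / exp t else 0) \<partial>lborel) = ennreal (Gamma a)"
proof -
  have "((\<lambda>t. t powr (a - 1) / exp t) has_integral Gamma a) {0..}"
    using Gamma_integral_real[OF assms] .
  then have "((\<lambda>t. if t \<in> {0..} then t powr (a - 1) / exp t else 0) has_integral Gamma a) UNIV"
    by (subst has_integral_restrict_UNIV)
  moreover have "(\<lambda>t. if t \<in> {0..} then t powr (a - 1) / exp t else 0)
      = (\<lambda>t::real. if 0 < t then t powr (a - 1) / exp t else 0)"
    by (auto simp: fun_eq_iff)
  ultimately show ?thesis
    using nn_integral_has_integral_lborel[of "\<lambda>t. if 0 < t then t powr (a - 1) / exp t else 0"] by auto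
qed

lemma nn_integral_gamma_density_moment:
  assumes k: "0 < k" and \<theta>: "0 < \<theta>"
  shows "(\<integral>\<^sup>+x. ennreal (gamma_density k \<theta> x * x ^ j) \<partial>lborel) = ennreal (\<theta> ^ j * pochhammer k j)"
proof -
  have Gamma: "0 < Gamma k" using k by (rule Gamma_real_pos)
  have rescale: "ennreal (gamma_density k \<theta> (0 + \<theta> * y) * (0 + \<theta> * y) ^ j) =
      ennreal (\<theta> ^ j / (\<theta> * Gamma k)) * ennreal (if 0 < y then y powr (k + j - 1) / exp y else 0)" for y
  proof (cases "0 < y")
    case True
    then have "gamma_density k \<theta> (\<theta> * y) * (\<theta> * y) ^ j = \<theta> ^ j / (\<theta> * Gamma k) * (y powr (k + j - 1) / exp y)"
      using \<theta> Gamma by (simp add: gamma_density_def powr_mult powr_diff powr_add powr_realpow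
          power_mult_distrib exp_minus field_simps)
    then show ?thesis using True \<theta> Gamma by (simp add: ennreal_mult[symmetric])
  qed (use \<theta> in \<open>simp add: gamma_density_def zero_less_mult_iff\<close>)
  have "(\<integral>\<^sup>+x. ennreal (gamma_density k \<theta> x * x ^ j) \<partial>lborel)
      = ennreal \<bar>\<theta>\<bar> * (\<integral>\<^sup>+y. ennreal (gamma_density k \<theta> (0 + \<theta> * y) * (0 + \<theta> * y) ^ j) \<partial>lborel)"
    by (rule nn_integral_real_affine) (use \<theta> in auto)
  also have "\<dots> = ennreal \<bar>\<theta>\<bar> * (ennreal (\<theta> ^ j / (\<theta> * Gamma k)) * ennreal (Gamma (k + j)))"
    using k by (subst rescale, subst nn_integral_cmult) (auto simp: nn_integral_Gamma_real)
  also have "\<dots> = ennreal (\<theta> ^ j * (Gamma (k + j) / Gamma k))"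
    using \<theta> Gamma k by (simp add: ennreal_mult[symmetric] Gamma_real_pos less_imp_le field_simps)
  also have "Gamma (k + j) / Gamma k = pochhammer k j"
    using k by (subst pochhammer_Gamma) (auto dest: nonpos_Ints_nonpos)
  finally show ?thesis .
qed

lemma gamma_density_moment:
  assumes k: "0 < k" and \<theta>: "0 < \<theta>"
  shows "has_bochner_integral lborel (\<lambda>x. gamma_density k \<theta> x * x ^ j) (\<theta> ^ j * pochhammer k j)"
proof (rule has_bochner_integral_nn_integral)
  show "AE x in lborel. 0 \<le> gamma_density k \<theta> x * x ^ j"
    using k by (auto simp: gamma_density_def intro!: divide_nonneg_nonneg mult_nonneg_nonneg)
  show "0 \<le> \<theta> ^ j * pochhammer k j"
    using k \<theta> by (simp add: pochhammer_nonneg)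
qed (use nn_integral_gamma_density_moment[OF k \<theta>] in auto)

lemma prob_space_gamma_distribution:
  assumes "0 < k" and "0 < \<theta>"
  shows "prob_space (gamma_distribution k \<theta>)"
  using nn_integral_gamma_density_moment[OF assms, of 0]
  by (intro prob_spaceI) (simp add: emeasure_density)

lemma gamma_density_central_moment:
  assumes k: "0 < k" and \<theta>: "0 < \<theta>"
  shows "has_bochner_integral lborel (\<lambda>x. gamma_density k \<theta> x * (x - k * \<theta>) ^ j)
           (\<Sum>i\<le>j. of_nat (j choose i) * (- (k * \<theta>)) ^ (j - i) * (\<theta> ^ i * pochhammer k i))"
proof -
  have "(\<lambda>x. gamma_density k \<theta> x * (x - k * \<theta>) ^ j)
      = (\<lambda>x. \<Sum>i\<le>j. of_nat (j choose i) * (- (k * \<theta>)) ^ (j - i) * (gamma_density k \<theta> x * x ^ i))"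
    unfolding diff_conv_add_uminus binomial_ring by (simp add: sum_distrib_left mult_ac)
  then show ?thesis
    by simp
      (intro has_bochner_integral_sum has_bochner_integral_mult_right gamma_density_moment k \<theta>)
qed

lemma gamma_density_central_moments:
  assumes "0 < k" and "0 < \<theta>"
  shows "has_bochner_integral lborel (\<lambda>x. gamma_density k \<theta> x * (x - k * \<theta>)) 0"
    and "has_bochner_integral lborel (\<lambda>x. gamma_density k \<theta> x * (x - k * \<theta>)\<^sup>2) (k * \<theta>\<^sup>2)"
    and "has_bochner_integral lborel (\<lambda>x. gamma_density k \<theta> x * (x - k * \<theta>) ^ 4) ((3 * k\<^sup>2 + 6 * k) * \<theta> ^ 4)"
  using gamma_density_central_moment[OF assms, of 1] gamma_density_central_moment[OF assms, of 2]
    gamma_density_central_moment[OF assms, of 4]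
  by (simp_all add: numeral_eq_Suc pochhammer_Suc algebra_simps power2_eq_square power3_eq_cube power4_eq_xxxx)

lemma integral_abs_cube_le:
  fixes Y :: "'a \<Rightarrow> real"
  assumes c: "0 < c" and [measurable]: "Y \<in> borel_measurable M"
    and Y2: "integrable M (\<lambda>x. (Y x)\<^sup>2)" and Y4: "integrable M (\<lambda>x. Y x ^ 4)"
  shows "integrable M (\<lambda>x. \<bar>Y x\<bar> ^ 3)"
    and "(\<integral>x. \<bar>Y x\<bar> ^ 3 \<partial>M) \<le> (c * (\<integral>x. (Y x)\<^sup>2 \<partial>M) + (\<integral>x. Y x ^ 4 \<partial>M) / c) / 2"
proof -
  have am_gm: "\<bar>y\<bar> ^ 3 \<le> (c * y\<^sup>2 + y ^ 4 / c) / 2" for y :: real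
  proof -
    have "(c * y\<^sup>2 + y ^ 4 / c) / 2 - \<bar>y\<bar> ^ 3 = y\<^sup>2 / c * (c - \<bar>y\<bar>)\<^sup>2 / 2"
      using c by (simp add: field_simps power2_eq_square power3_eq_cube power4_eq_xxxx)
    moreover have "0 \<le> y\<^sup>2 / c * (c - \<bar>y\<bar>)\<^sup>2 / 2" using c by simp
    ultimately show ?thesis by linarith
  qed
  have bound: "integrable M (\<lambda>x. (c * (Y x)\<^sup>2 + Y x ^ 4 / c) / 2)"
    using Y2 Y4 by auto
  show int3: "integrable M (\<lambda>x. \<bar>Y x\<bar> ^ 3)"
  proof (rule Bochner_Integration.integrable_bound[OF bound])
    show "AE x in M. norm (\<bar>Y x\<bar> ^ 3) \<le> norm ((c * (Y x)\<^sup>2 + Y x ^ 4 / c) / 2)"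
      using am_gm by (auto intro: order_trans[OF _ abs_ge_self])
  qed measurable
  have "(\<integral>x. \<bar>Y x\<bar> ^ 3 \<partial>M) \<le> (\<integral>x. (c * (Y x)\<^sup>2 + Y x ^ 4 / c) / 2 \<partial>M)"
    by (intro integral_mono int3 bound am_gm)
  also have "\<dots> = (c * (\<integral>x. (Y x)\<^sup>2 \<partial>M) + (\<integral>x. Y x ^ 4 \<partial>M) / c) / 2"
    using Y2 Y4 by simp
  finally show "(\<integral>x. \<bar>Y x\<bar> ^ 3 \<partial>M) \<le> (c * (\<integral>x. (Y x)\<^sup>2 \<partial>M) + (\<integral>x. Y x ^ 4 \<partial>M) / c) / 2" .
qed

lemma has_bochner_integral_distr_density:
  fixes g h f :: "real \<Rightarrow> real"
  assumes [measurable]: "g \<in> borel_measurable borel" "h \<in> borel_measurable borel" "f \<in> borel_measurable borel"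
    and "\<And>x. 0 \<le> g x" and "has_bochner_integral lborel (\<lambda>x. g x * f (h x)) I"
  shows "has_bochner_integral (distr (density lborel (\<lambda>x. ennreal (g x))) borel h) f I"
  using assms by (intro has_bochner_integral_distr has_bochner_integral_density) auto

lemma centred_gamma_moments:
  assumes k: "0 < k" and \<theta>: "0 < \<theta>" and s: "\<bar>s\<bar> = 1"
  defines "N \<equiv> distr (gamma_distribution k \<theta>) borel (\<lambda>x. s * (x - k * \<theta>))"
  shows "prob_space N" and "sets N = sets borel" and "integrable N (\<lambda>y. \<bar>y\<bar> ^ 3)"
    and "(\<integral>y. y \<partial>N) = 0" and "(\<integral>y. y\<^sup>2 \<partial>N) = k * \<theta>\<^sup>2"
    and "(\<integral>y. \<bar>y\<bar> ^ 3 \<partial>N) \<le> sqrt (3 + 6 / k) * (k * \<theta>\<^sup>2) powr (3/2)"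
proof -
  have s2: "s * s = 1" using s by (metis abs_mult_self_eq mult_1)
  have N_integral: "has_bochner_integral N f I"
    if "f \<in> borel_measurable borel"
      and "has_bochner_integral lborel (\<lambda>x. gamma_density k \<theta> x * f (s * (x - k * \<theta>))) I" for f I
    unfolding N_def using that gamma_density_nonneg[OF k \<theta>]
    by (intro has_bochner_integral_distr_density) auto
  note central = gamma_density_central_moments[OF k \<theta>]
  have mean: "has_bochner_integral N (\<lambda>y. y) 0"
    using has_bochner_integral_mult_right[OF central(1), of s] by (intro N_integral) (simp_all add: mult_ac)
  have var: "has_bochner_integral N (\<lambda>y. y\<^sup>2) (k * \<theta>\<^sup>2)"
  proof -
    have "(s * y)\<^sup>2 = y\<^sup>2" for y
      using s2 by (simp add: power_mult_distrib power2_eq_square)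
    then show ?thesis
      using central(2) by (intro N_integral) simp_all
  qed
  have fourth: "has_bochner_integral N (\<lambda>y. y ^ 4) ((3 + 6 / k) * (k * \<theta>\<^sup>2)\<^sup>2)"
  proof -
    have "(3 * k\<^sup>2 + 6 * k) * \<theta> ^ 4 = (3 + 6 / k) * (k * \<theta>\<^sup>2)\<^sup>2"
      using k by (simp add: field_simps power2_eq_square power4_eq_xxxx)
    moreover have "(s * y) ^ 4 = y ^ 4" for y
      using s2 by (simp add: power_mult_distrib power4_eq_xxxx)
    ultimately show ?thesis
      using central(3) by (intro N_integral) simp_all
  qed
  show "prob_space N"
    unfolding N_def using prob_space_gamma_distribution[OF k \<theta>] by (rule prob_space.prob_space_distr) simp
  show sets: "sets N = sets borel" by (simp add: N_def)
  show "(\<integral>y. y \<partial>N) = 0" "(\<integral>y. y\<^sup>2 \<partial>N) = k * \<theta>\<^sup>2"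
    using mean var by (simp_all add: has_bochner_integral_iff)
  define a where "a = k * \<theta>\<^sup>2"
  define K where "K = 3 + 6 / k"
  have a: "0 < a" and K: "0 < K" using k \<theta> by (simp_all add: a_def K_def add_pos_pos)
  \<comment> \<open>the optimal AM-GM parameter, turning the bound into \<open>E|Y|^3 \<le> sqrt (E Y^2 * E Y^4)\<close>\<close>
  define c where "c = sqrt K * sqrt a"
  have c: "0 < c" using a K by (simp add: c_def)
  note cube = integral_abs_cube_le[OF c measurable_ident_sets[OF sets]]
  show "integrable N (\<lambda>y. \<bar>y\<bar> ^ 3)"
    using cube(1) var fourth by (simp add: has_bochner_integral_iff)
  have "(\<integral>y. \<bar>y\<bar> ^ 3 \<partial>N) \<le> (c * a + K * a\<^sup>2 / c) / 2"
    using cube(2) var fourth by (simp add: has_bochner_integral_iff a_def K_def)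
  also have "\<dots> = sqrt K * (a * sqrt a)"
    using a K by (simp add: c_def field_simps power2_eq_square)
  also have "a * sqrt a = a powr (3/2)"
    using a powr_add[of a 1 "1/2"] by (simp add: powr_half_sqrt)
  finally show "(\<integral>y. \<bar>y\<bar> ^ 3 \<partial>N) \<le> sqrt (3 + 6 / k) * (k * \<theta>\<^sup>2) powr (3/2)"
    by (simp add: a_def K_def)
qed

lemma std_normal_cdf_zero: "std_normal_cdf 0 = 1/2"
proof -
  define S where "S = density lborel (\<lambda>x. ennreal (std_normal_density x))"
  interpret S: prob_space S unfolding S_def using prob_space_normal_density by simp
  have "emeasure S {..0} = (\<integral>\<^sup>+x. ennreal (std_normal_density x) * indicator {..0} x \<partial>lborel)"
    unfolding S_def by (simp add: emeasure_density)
  also have "\<dots> = ennreal \<bar>-1\<bar> * (\<integral>\<^sup>+x. ennreal (std_normal_density (0 + -1 * x)) * indicator {..0} (0 + -1 * x) \<partial>lborel)"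
    by (rule nn_integral_real_affine) auto
  also have "\<dots> = (\<integral>\<^sup>+x. ennreal (std_normal_density x) * indicator {0..} x \<partial>lborel)"
    by (auto simp: std_normal_density_def indicator_def intro!: nn_integral_cong)
  also have "\<dots> = emeasure S {0..}"
    unfolding S_def by (simp add: emeasure_density)
  finally have symmetric: "measure S {..0} = measure S {0..}"
    by (simp add: measure_def)
  have "emeasure S {0} = (\<integral>\<^sup>+x. ennreal (std_normal_density x) * indicator {0} x \<partial>lborel)"
    unfolding S_def by (simp add: emeasure_density)
  also have "\<dots> = 0"
    by (rule nn_integral_null_set) (auto simp: null_sets_def)
  finally have "measure S {0} = 0" by (simp add: measure_def)
  moreover have "measure S {0..} = measure S {0} + measure S {0<..}"
  proof -
    have "{0..} = {0} \<union> {0::real<..}" by auto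
    then show ?thesis by (simp only:) (rule S.finite_measure_Union; simp add: S_def)
  qed
  moreover have "measure S {..0} + measure S {0<..} = 1"
  proof -
    have "{..0} \<union> {0::real<..} = space S" by (auto simp: S_def)
    moreover have "{..0} \<inter> {0::real<..} = {}" by auto
    ultimately show ?thesis using S.finite_measure_Union[of "{..0}" "{0<..}"] S.prob_space by (simp add: S_def)
  qed
  ultimately show ?thesis
    using symmetric S.prob_space unfolding std_normal_cdf_def S_def[symmetric] by simp
qed

lemma berry_esseen_sum_nonpos:
  fixes N :: "real measure" and n :: nat
  assumes BE: "berry_esseen_const C" and N: "prob_space N" "sets N = sets borel"
    and "integrable N (\<lambda>y. \<bar>y\<bar> ^ 3)" "(\<integral>y. y \<partial>N) = 0" and V: "0 < (\<integral>y. y\<^sup>2 \<partial>N)"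
    and n: "1 \<le> n"
  shows "measure (PiM {..<n} (\<lambda>_. N)) {\<omega> \<in> space (PiM {..<n} (\<lambda>_. N)). (\<Sum>i<n. \<omega> i) \<le> 0}
    \<le> 1/2 + C / sqrt n * ((\<integral>y. \<bar>y\<bar> ^ 3 \<partial>N) / (\<integral>y. y\<^sup>2 \<partial>N) powr (3/2))"
proof -
  have "0 < sqrt (n * (\<integral>y. y\<^sup>2 \<partial>N))"
    using n V by simp
  then have "(t / sqrt (n * (\<integral>y. y\<^sup>2 \<partial>N)) \<le> 0) = (t \<le> 0)" for t :: real
    by (simp add: divide_le_0_iff)
  then show ?thesis
    using BE[unfolded berry_esseen_const_def, THEN conjunct2, rule_format, OF assms(2-), of 0]
    by (simp add: std_normal_cdf_zero)
qed

lemma measure_PiM_distr_sum_reindex: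
  fixes G :: "real measure" and h :: "real \<Rightarrow> real" and Q :: "real \<Rightarrow> bool" and n :: nat
  assumes G: "prob_space G" "sets G = sets borel"
    and [measurable]: "h \<in> borel_measurable borel" "Measurable.pred borel Q"
  shows "measure (PiM {..<n} (\<lambda>_. distr G borel h))
           {\<omega> \<in> space (PiM {..<n} (\<lambda>_. distr G borel h)). Q (\<Sum>i<n. \<omega> i)}
       = measure (PiM {1..n} (\<lambda>_. G)) {x \<in> space (PiM {1..n} (\<lambda>_. G)). Q (\<Sum>i\<in>{1..n}. h (x i))}"
proof -
  define H where "H = distr G borel h"
  have sH: "sets H = sets borel" by (simp add: H_def)
  have hG: "h \<in> measurable G borel"
    by (subst measurable_cong_sets[OF G(2) refl]) (rule assms(3))
  then have hH: "h \<in> measurable G H"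
    by (simp add: measurable_cong_sets[OF refl sH])
  have H: "prob_space H" unfolding H_def by (rule prob_space.prob_space_distr[OF G(1) hG])
  define shift where "shift = (\<lambda>\<omega>. \<lambda>j\<in>{..<n}. \<omega> (Suc j) :: real)"
  have shift[measurable]: "shift \<in> measurable (PiM {1..n} (\<lambda>_. G)) (PiM {..<n} (\<lambda>_. G))"
    unfolding shift_def by (intro measurable_restrict measurable_component_singleton) auto
  have comp: "compose {..<n} h \<in> measurable (PiM {..<n} (\<lambda>_. G)) (PiM {..<n} (\<lambda>_. H))"
    unfolding compose_def
    by (intro measurable_restrict)
      (rule measurable_compose[OF measurable_component_singleton[of _ _ "\<lambda>_. G"] hH], simp)
  have "distr G H h = H" unfolding H_def by (rule distr_cong) (simp_all add: H_def)
  then have law_H: "PiM {..<n} (\<lambda>_. H) = distr (PiM {..<n} (\<lambda>_. G)) (PiM {..<n} (\<lambda>_. H)) (compose {..<n} h)"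
    using distr_PiM_finite_prob_space'[of "{..<n}" "\<lambda>_. G" "\<lambda>_. H" h] G(1) H hH by simp
  have law_G: "PiM {..<n} (\<lambda>_. G) = distr (PiM {1..n} (\<lambda>_. G)) (PiM {..<n} (\<lambda>_. G)) shift"
    using distr_PiM_reindex[of "{1..n}" "\<lambda>_. G" Suc "{..<n}"] G(1) by (auto simp: shift_def)
  define E where "E = {\<omega> \<in> space (PiM {..<n} (\<lambda>_. H)). Q (\<Sum>i<n. \<omega> i)}"
  have [measurable]: "(\<lambda>\<omega>. \<Sum>i<n. \<omega> i) \<in> borel_measurable (PiM {..<n} (\<lambda>_. H))"
    by (intro borel_measurable_sum measurable_component_singleton[THEN measurable_compose])
      (auto simp: measurable_cong_sets[OF sH refl])
  have E: "E \<in> sets (PiM {..<n} (\<lambda>_. H))" unfolding E_def by measurable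
  have "measure (PiM {..<n} (\<lambda>_. H)) E
      = measure (PiM {1..n} (\<lambda>_. G)) (shift -` (compose {..<n} h -` E \<inter> space (PiM {..<n} (\<lambda>_. G))) \<inter> space (PiM {1..n} (\<lambda>_. G)))"
    by (subst law_H, subst measure_distr[OF comp E], subst law_G, rule measure_distr[OF shift])
      (rule measurable_sets[OF comp E])
  also have "shift -` (compose {..<n} h -` E \<inter> space (PiM {..<n} (\<lambda>_. G))) \<inter> space (PiM {1..n} (\<lambda>_. G))
      = {x \<in> space (PiM {1..n} (\<lambda>_. G)). Q (\<Sum>i\<in>{1..n}. h (x i))}"
  proof -
    have "(\<Sum>i<n. compose {..<n} h (shift x) i) = (\<Sum>i\<in>{1..n}. h (x i))" for x
      using sum.atLeast1_atMost_eq[of "\<lambda>i. h (x i)" n] by (simp add: compose_def shift_def)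
    then show ?thesis
      using measurable_space[OF shift] measurable_space[OF comp] by (auto simp: E_def)
  qed
  finally show ?thesis by (simp add: E_def H_def)
qed

lemma PiM_density:
  fixes M :: "'a measure" and g :: "'a \<Rightarrow> ennreal" and I :: "'i set"
  assumes I: "finite I" and M: "sigma_finite_measure M" and g[measurable]: "g \<in> borel_measurable M"
    and Mg: "sigma_finite_measure (density M g)"
  shows "PiM I (\<lambda>_. density M g) = density (PiM I (\<lambda>_. M)) (\<lambda>x. \<Prod>i\<in>I. g (x i))"
proof -
  interpret Mg: product_sigma_finite "\<lambda>_. density M g"
    unfolding product_sigma_finite_def using Mg by simp
  interpret M: product_sigma_finite "\<lambda>_::'i. M"
    unfolding product_sigma_finite_def using M by simp
  show ?thesis
  proof (rule Mg.PiM_eqI[OF I, symmetric])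
    show "sets (density (PiM I (\<lambda>_. M)) (\<lambda>x. \<Prod>i\<in>I. g (x i))) = sets (PiM I (\<lambda>_. density M g))"
      by (simp only: sets_density) (rule sets_PiM_cong, simp_all)
  next
    fix A assume A: "\<And>i. i \<in> I \<Longrightarrow> A i \<in> sets (density M g)"
    have box: "Pi\<^sub>E I A \<in> sets (PiM I (\<lambda>_. M))"
      using A by (intro sets_PiM_I_finite I) auto
    have indicator_box: "indicator (Pi\<^sub>E I A) x = (\<Prod>i\<in>I. indicator (A i) (x i) :: ennreal)"
      if "x \<in> space (PiM I (\<lambda>_. M))" for x
    proof (cases "\<forall>i\<in>I. x i \<in> A i")
      case True
      then show ?thesis using that by (simp add: space_PiM PiE_def prod.neutral)
    next
      case False
      then obtain i where i: "i \<in> I" "x i \<notin> A i" by auto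
      then have "x \<notin> Pi\<^sub>E I A" by (auto simp: PiE_def)
      moreover have "(\<Prod>i\<in>I. indicator (A i) (x i) :: ennreal) = 0"
        using i I by (intro prod_zero) (auto intro!: bexI[of _ i])
      ultimately show ?thesis by simp
    qed
    have "emeasure (density (PiM I (\<lambda>_. M)) (\<lambda>x. \<Prod>i\<in>I. g (x i))) (Pi\<^sub>E I A)
        = (\<integral>\<^sup>+x. (\<Prod>i\<in>I. g (x i) * indicator (A i) (x i)) \<partial>PiM I (\<lambda>_. M))"
      by (subst emeasure_density[OF _ box]) (auto simp: indicator_box prod.distrib intro!: nn_integral_cong)
    also have "\<dots> = (\<Prod>i\<in>I. \<integral>\<^sup>+y. g y * indicator (A i) y \<partial>M)"
      using A by (intro M.product_nn_integral_prod I) auto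
    also have "\<dots> = (\<Prod>i\<in>I. emeasure (density M g) (A i))"
      using A by (intro prod.cong refl) (auto simp: emeasure_density)
    finally show "emeasure (density (PiM I (\<lambda>_. M)) (\<lambda>x. \<Prod>i\<in>I. g (x i))) (Pi\<^sub>E I A)
        = (\<Prod>i\<in>I. emeasure (density M g) (A i))" .
  qed
qed

lemma measure_sum_indep_eq_PiM:
  fixes M :: "'a measure" and X :: "'i \<Rightarrow> 'a \<Rightarrow> real" and f :: "real \<Rightarrow> ennreal" and I :: "'i set"
  assumes M: "prob_space M" and I: "finite I" "I \<noteq> {}"
    and indep: "prob_space.indep_vars M (\<lambda>_. borel) X I"
    and distributed: "\<And>i. i \<in> I \<Longrightarrow> distributed M lborel (X i) f"
    and [measurable]: "Measurable.pred borel Q"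
  shows "measure M {\<omega> \<in> space M. Q (\<Sum>i\<in>I. X i \<omega>)}
       = measure (PiM I (\<lambda>_. density lborel f)) {x \<in> space (PiM I (\<lambda>_. borel)). Q (\<Sum>i\<in>I. x i)}"
proof -
  interpret M: prob_space M by (rule M)
  have X[measurable]: "X i \<in> borel_measurable M" if "i \<in> I" for i
    using distributed[OF that] by (simp add: distributed_def measurable_cong_sets[OF refl sets_lborel])
  define Y where "Y = (\<lambda>\<omega>. \<lambda>i\<in>I. X i \<omega>)"
  have Y: "Y \<in> measurable M (PiM I (\<lambda>_. borel))"
    unfolding Y_def by (intro measurable_restrict X)
  have "distr M (PiM I (\<lambda>_. borel)) Y = PiM I (\<lambda>i. distr M borel (X i))"
    using M.indep_vars_iff_distr_eq_PiM'[where I=I and M'="\<lambda>_. borel" and X=X] I indep by (simp add: Y_def)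
  also have "\<dots> = PiM I (\<lambda>_. density lborel f)"
  proof (rule PiM_cong[OF refl])
    fix i assume "i \<in> I"
    have "distr M borel (X i) = distr M lborel (X i)" by (rule distr_cong) auto
    then show "distr M borel (X i) = density lborel f"
      using distributed[OF \<open>i \<in> I\<close>] by (simp add: distributed_def)
  qed
  finally have law: "PiM I (\<lambda>_. density lborel f) = distr M (PiM I (\<lambda>_. borel)) Y" ..
  define E where "E = {x \<in> space (PiM I (\<lambda>_. borel :: real measure)). Q (\<Sum>i\<in>I. x i)}"
  have E: "E \<in> sets (PiM I (\<lambda>_. borel))" unfolding E_def by measurable
  have "measure (PiM I (\<lambda>_. density lborel f)) E = measure M (Y -` E \<inter> space M)"
    unfolding law by (rule measure_distr[OF Y E])
  also have "Y -` E \<inter> space M = {\<omega> \<in> space M. Q (\<Sum>i\<in>I. X i \<omega>)}"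
    using measurable_space[OF Y] by (auto simp: E_def Y_def)
  finally show ?thesis by (simp add: E_def)
qed

lemma gamma_PiM_sum_one_sided_le:
  fixes k \<theta> s :: real and n :: nat
  assumes BE: "berry_esseen_const C" and k: "0 < k" and \<theta>: "0 < \<theta>" and s: "\<bar>s\<bar> = 1" and n: "1 \<le> n"
  shows "measure (PiM {1..n} (\<lambda>_. gamma_distribution k \<theta>))
           {x \<in> space (PiM {1..n} (\<lambda>_. gamma_distribution k \<theta>)). s * (\<Sum>i\<in>{1..n}. x i) \<le> s * (real n * (k * \<theta>))}
         \<le> 1/2 + min (1/2) (C / sqrt n * (3 + 6 / k) powr (3/4))"
    (is "measure ?P ?E \<le> _")
proof -
  define G where "G = gamma_distribution k \<theta>"
  define N where "N = distr G borel (\<lambda>x. s * (x - k * \<theta>))"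
  note N = centred_gamma_moments[OF k \<theta> s, folded G_def N_def]
  interpret P: prob_space ?P
    by (intro prob_space_PiM prob_space_gamma_distribution k \<theta>)
  have V: "0 < (\<integral>y. y\<^sup>2 \<partial>N)" using N(5) k \<theta> by simp
  have C: "0 \<le> C" using BE by (simp add: berry_esseen_const_def)
  have ratio: "(\<integral>y. \<bar>y\<bar> ^ 3 \<partial>N) / (\<integral>y. y\<^sup>2 \<partial>N) powr (3/2) \<le> (3 + 6 / k) powr (3/4)"
  proof -
    have "(\<integral>y. \<bar>y\<bar> ^ 3 \<partial>N) / (\<integral>y. y\<^sup>2 \<partial>N) powr (3/2) \<le> sqrt (3 + 6 / k)"
      using N(5,6) k \<theta> by (simp add: divide_le_eq)
    also have "\<dots> \<le> (3 + 6 / k) powr (3/4)"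
      using k by (simp add: powr_half_sqrt[symmetric] powr_mono)
    finally show ?thesis .
  qed
  have "(\<Sum>i\<in>{1..n}. s * (x i - k * \<theta>)) \<le> 0 \<longleftrightarrow> s * (\<Sum>i\<in>{1..n}. x i) \<le> s * (real n * (k * \<theta>))" for x
    by (simp add: sum_distrib_left[symmetric] sum_subtractf algebra_simps)
  then have "measure ?P ?E = measure (PiM {1..n} (\<lambda>_. G))
      {x \<in> space (PiM {1..n} (\<lambda>_. G)). (\<Sum>i\<in>{1..n}. s * (x i - k * \<theta>)) \<le> 0}"
    by (simp add: G_def)
  also have "\<dots> = measure (PiM {..<n} (\<lambda>_. N)) {\<omega> \<in> space (PiM {..<n} (\<lambda>_. N)). (\<Sum>i<n. \<omega> i) \<le> 0}"
    unfolding N_def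
    by (intro measure_PiM_distr_sum_reindex[symmetric])
      (simp_all add: G_def prob_space_gamma_distribution[OF k \<theta>])
  also have "\<dots> \<le> 1/2 + C / sqrt n * ((\<integral>y. \<bar>y\<bar> ^ 3 \<partial>N) / (\<integral>y. y\<^sup>2 \<partial>N) powr (3/2))"
    by (rule berry_esseen_sum_nonpos[OF BE N(1-4) V n])
  also have "\<dots> \<le> 1/2 + C / sqrt n * (3 + 6 / k) powr (3/4)"
    using C by (intro add_left_mono mult_left_mono ratio) simp
  finally show ?thesis
    using P.prob_le_1[of ?E] by linarith
qed

lemma emeasure_density_le_cmult:
  fixes f g :: "'a \<Rightarrow> ennreal"
  assumes [measurable]: "f \<in> borel_measurable M" "g \<in> borel_measurable M" "A \<in> sets M"
    and le: "\<And>x. x \<in> A \<Longrightarrow> f x \<le> c * g x"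
  shows "emeasure (density M f) A \<le> c * emeasure (density M g) A"
proof -
  have "emeasure (density M f) A = (\<integral>\<^sup>+x. f x * indicator A x \<partial>M)"
    by (rule emeasure_density) auto
  also have "\<dots> \<le> (\<integral>\<^sup>+x. c * (g x * indicator A x) \<partial>M)"
    by (intro nn_integral_mono) (auto simp: le mult.assoc[symmetric] split: split_indicator)
  also have "\<dots> = c * emeasure (density M g) A"
    by (simp add: nn_integral_cmult emeasure_density)
  finally show ?thesis .
qed

lemma gamma_density_eq_tilted:
  assumes k: "0 < k" and \<theta>: "0 < \<theta>" and \<rho>: "0 < \<rho>"
  shows "gamma_density k \<theta> x = \<rho> powr k * exp ((1 - \<rho>) / (\<rho> * \<theta>) * x) * gamma_density k (\<rho> * \<theta>) x"
proof (cases "0 < x")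
  case True
  have "exp (- (x / \<theta>)) = exp (- (x / (\<rho> * \<theta>))) * exp ((x - \<rho> * x) / (\<rho> * \<theta>))"
    unfolding exp_add[symmetric] using \<rho> \<theta> by (intro arg_cong[where f = exp]) (simp add: field_simps)
  then show ?thesis
    using True \<rho> \<theta> by (simp add: gamma_density_def powr_mult field_simps)
qed (simp add: gamma_density_def)

lemma prod_gamma_density_le_tilted:
  assumes I: "finite I" and k: "0 < k" and \<theta>: "0 < \<theta>" and \<rho>: "0 < \<rho>"
    and s: "\<bar>s\<bar> = 1" and sign: "0 \<le> s * (1 - \<rho>)"
    and tail: "s * (\<Sum>i\<in>I. x i) \<le> s * (real (card I) * (k * (\<rho> * \<theta>)))"
  shows "(\<Prod>i\<in>I. gamma_density k \<theta> (x i))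
      \<le> (\<rho> * exp (1 - \<rho>)) powr (k * real (card I)) * (\<Prod>i\<in>I. gamma_density k (\<rho> * \<theta>) (x i))"
proof -
  define \<beta> where "\<beta> = (1 - \<rho>) / (\<rho> * \<theta>)"
  have s2: "s * s = 1" using s by (metis abs_mult_self_eq mult_1)
  \<comment> \<open>\<open>s\<close> orients the tail so that it has the sign of the tilt \<open>\<beta>\<close>\<close>
  have "\<beta> * (\<Sum>i\<in>I. x i) = (s * \<beta>) * (s * (\<Sum>i\<in>I. x i))"
    using s2 by (simp add: mult_ac)
  also have "\<dots> \<le> (s * \<beta>) * (s * (real (card I) * (k * (\<rho> * \<theta>))))"
  proof (rule mult_left_mono[OF tail])
    show "0 \<le> s * \<beta>"
      using sign \<rho> \<theta> by (simp add: \<beta>_def)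
  qed
  also have "\<dots> = (s * s) * (\<beta> * (real (card I) * (k * (\<rho> * \<theta>))))"
    by (simp only: mult_ac)
  also have "\<dots> = (1 - \<rho>) * k * real (card I)"
    using \<rho> \<theta> by (simp add: s2 \<beta>_def field_simps)
  finally have exponent: "\<beta> * (\<Sum>i\<in>I. x i) \<le> (1 - \<rho>) * k * real (card I)" .
  have "(\<Prod>i\<in>I. gamma_density k \<theta> (x i))
      = (\<rho> powr k) ^ card I * exp (\<beta> * (\<Sum>i\<in>I. x i)) * (\<Prod>i\<in>I. gamma_density k (\<rho> * \<theta>) (x i))"
    using I by (simp add: gamma_density_eq_tilted[OF k \<theta> \<rho>] \<beta>_def prod.distrib exp_sum sum_distrib_left)
  also have "\<dots> \<le> (\<rho> powr k) ^ card I * exp ((1 - \<rho>) * k * real (card I)) * (\<Prod>i\<in>I. gamma_density k (\<rho> * \<theta>) (x i))"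
    using exponent k \<theta> \<rho>
    by (intro mult_right_mono mult_left_mono prod_nonneg gamma_density_nonneg) (auto simp: mult_pos_pos)
  also have "(\<rho> powr k) ^ card I * exp ((1 - \<rho>) * k * real (card I)) = (\<rho> * exp (1 - \<rho>)) powr (k * real (card I))"
    using \<rho> by (simp add: powr_power powr_mult exp_powr_real mult.commute mult.left_commute)
  finally show ?thesis .
qed

lemma measure_gamma_PiM_le_tilted:
  fixes I :: "'i set" and k \<theta> \<rho> s :: real
  assumes I: "finite I" and k: "0 < k" and \<theta>: "0 < \<theta>" and \<rho>: "0 < \<rho>"
    and s: "\<bar>s\<bar> = 1" and sign: "0 \<le> s * (1 - \<rho>)"
  defines "E \<equiv> {x \<in> space (PiM I (\<lambda>_. borel)). s * (\<Sum>i\<in>I. x i) \<le> s * (real (card I) * (k * (\<rho> * \<theta>)))}"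
  shows "measure (PiM I (\<lambda>_. gamma_distribution k \<theta>)) E
    \<le> (\<rho> * exp (1 - \<rho>)) powr (k * real (card I)) * measure (PiM I (\<lambda>_. gamma_distribution k (\<rho> * \<theta>))) E"
proof -
  define c where "c = (\<rho> * exp (1 - \<rho>)) powr (k * real (card I))"
  have \<rho>\<theta>: "0 < \<rho> * \<theta>" using \<rho> \<theta> by simp
  have law: "PiM I (\<lambda>_. gamma_distribution k t)
      = density (PiM I (\<lambda>_. lborel)) (\<lambda>x. ennreal (\<Prod>i\<in>I. gamma_density k t (x i)))" if t: "0 < t" for t
  proof -
    have "PiM I (\<lambda>_. gamma_distribution k t)
        = density (PiM I (\<lambda>_. lborel)) (\<lambda>x. \<Prod>i\<in>I. ennreal (gamma_density k t (x i)))"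
      using prob_space_gamma_distribution[OF k t]
      by (intro PiM_density I sigma_finite_lborel prob_space_imp_sigma_finite) simp
    then show ?thesis
      using gamma_density_nonneg[OF k t] by (simp add: prod_ennreal)
  qed
  have "sets (PiM I (\<lambda>_. lborel)) = sets (PiM I (\<lambda>_. borel :: real measure))"
    by (rule sets_PiM_cong) simp_all
  then have E: "E \<in> sets (PiM I (\<lambda>_. lborel))"
    unfolding E_def by simp measurable
  interpret P: prob_space "PiM I (\<lambda>_. gamma_distribution k \<theta>)"
    by (intro prob_space_PiM prob_space_gamma_distribution k \<theta>)
  interpret P': prob_space "PiM I (\<lambda>_. gamma_distribution k (\<rho> * \<theta>))"
    by (intro prob_space_PiM prob_space_gamma_distribution k \<rho>\<theta>)
  have "emeasure (PiM I (\<lambda>_. gamma_distribution k \<theta>)) E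
      \<le> ennreal c * emeasure (PiM I (\<lambda>_. gamma_distribution k (\<rho> * \<theta>))) E"
    unfolding law[OF \<theta>] law[OF \<rho>\<theta>]
  proof (rule emeasure_density_le_cmult[OF _ _ E])
    fix x assume "x \<in> E"
    then have "s * (\<Sum>i\<in>I. x i) \<le> s * (real (card I) * (k * (\<rho> * \<theta>)))"
      by (simp add: E_def)
    then show "ennreal (\<Prod>i\<in>I. gamma_density k \<theta> (x i))
        \<le> ennreal c * ennreal (\<Prod>i\<in>I. gamma_density k (\<rho> * \<theta>) (x i))"
      unfolding c_def ennreal_mult'[symmetric, OF powr_ge_zero]
      by (intro ennreal_leI prod_gamma_density_le_tilted[OF I k \<theta> \<rho> s sign])
  qed measurable
  then show ?thesis
    by (simp add: P.emeasure_eq_measure P'.emeasure_eq_measure c_def ennreal_mult'[symmetric])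
qed

lemma gamma_sum_tail_le:
  fixes M :: "'a measure" and X :: "nat \<Rightarrow> 'a \<Rightarrow> real" and k \<theta> C \<rho> s :: real and n :: nat
  assumes M: "prob_space M" and BE: "berry_esseen_const C"
    and k: "0 < k" and \<theta>: "0 < \<theta>" and n: "1 \<le> n"
    and indep: "prob_space.indep_vars M (\<lambda>_. borel) X {1..n}"
    and distributed: "\<And>i. i \<in> {1..n} \<Longrightarrow> distributed M lborel (X i) (\<lambda>x. ennreal (gamma_density k \<theta> x))"
    and \<rho>: "0 < \<rho>" and s: "\<bar>s\<bar> = 1" and sign: "0 \<le> s * (1 - \<rho>)"
  shows "measure M {\<omega> \<in> space M. s * (\<Sum>i\<in>{1..n}. X i \<omega>) \<le> s * (real n * (k * (\<rho> * \<theta>)))}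
    \<le> (1/2 + min (1/2) (C / sqrt n * (3 + 6 / k) powr (3/4))) * (\<rho> * exp (1 - \<rho>)) powr (k * real n)"
proof -
  let ?E = "{x \<in> space (PiM {1..n} (\<lambda>_. borel)). s * (\<Sum>i\<in>{1..n}. x i) \<le> s * (real n * (k * (\<rho> * \<theta>)))}"
  have "measure M {\<omega> \<in> space M. s * (\<Sum>i\<in>{1..n}. X i \<omega>) \<le> s * (real n * (k * (\<rho> * \<theta>)))}
      = measure (PiM {1..n} (\<lambda>_. gamma_distribution k \<theta>)) ?E"
    using n by (intro measure_sum_indep_eq_PiM[OF M _ _ indep distributed]) auto
  also have "\<dots> \<le> (\<rho> * exp (1 - \<rho>)) powr (k * real n) * measure (PiM {1..n} (\<lambda>_. gamma_distribution k (\<rho> * \<theta>))) ?E"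
    using measure_gamma_PiM_le_tilted[OF _ k \<theta> \<rho> s sign, of "{1..n}"] by simp
  also have "\<dots> \<le> (\<rho> * exp (1 - \<rho>)) powr (k * real n) * (1/2 + min (1/2) (C / sqrt n * (3 + 6 / k) powr (3/4)))"
    using gamma_PiM_sum_one_sided_le[OF BE k _ s n, of "\<rho> * \<theta>"] \<rho> \<theta>
    by (intro mult_left_mono) (simp_all add: space_PiM)
  finally show ?thesis by (simp only: mult.commute)
qed

theorem theorem9:
  fixes M :: "'a measure" and X :: "nat \<Rightarrow> 'a \<Rightarrow> real"
    and k \<theta> C :: real and n :: nat
  assumes "prob_space M"
    and "berry_esseen_const C"
    and "0 < k" and "0 < \<theta>" and "1 \<le> n"
    and "prob_space.indep_vars M (\<lambda>_. borel) X {1..n}"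
    and "\<And>i. i \<in> {1..n} \<Longrightarrow>
           distributed M lborel (X i) (\<lambda>x. ennreal (gamma_density k \<theta> x))"
  defines "\<Delta> \<equiv> min (1/2) (C / sqrt (real n) * (3 + 6 / k) powr (3/4))"
  shows "(\<forall>\<rho>. 0 < \<rho> \<and> \<rho> \<le> 1 \<longrightarrow>
           measure M {\<omega> \<in> space M. (\<Sum>i\<in>{1..n}. X i \<omega>) / real n \<le> \<rho> * k * \<theta>}
             \<le> (1/2 + \<Delta>) * (\<rho> * exp (1 - \<rho>)) powr (k * real n)) \<and>
         (\<forall>\<rho>. 1 \<le> \<rho> \<longrightarrow>
           measure M {\<omega> \<in> space M. (\<Sum>i\<in>{1..n}. X i \<omega>) / real n \<ge> \<rho> * k * \<theta>}
             \<le> (1/2 + \<Delta>) * (\<rho> * exp (1 - \<rho>)) powr (k * real n))"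
proof (intro conjI allI impI)
  note tail = gamma_sum_tail_le[OF assms(1-7), folded \<Delta>_def]
  have n: "0 < real n" using assms(5) by simp
  fix \<rho> :: real
  show "measure M {\<omega> \<in> space M. (\<Sum>i\<in>{1..n}. X i \<omega>) / real n \<le> \<rho> * k * \<theta>}
      \<le> (1/2 + \<Delta>) * (\<rho> * exp (1 - \<rho>)) powr (k * real n)" if "0 < \<rho> \<and> \<rho> \<le> 1"
    using tail[of \<rho> 1] that n by (simp add: pos_divide_le_eq mult_ac)
  show "measure M {\<omega> \<in> space M. (\<Sum>i\<in>{1..n}. X i \<omega>) / real n \<ge> \<rho> * k * \<theta>}
      \<le> (1/2 + \<Delta>) * (\<rho> * exp (1 - \<rho>)) powr (k * real n)" if "1 \<le> \<rho>"
    using tail[of \<rho> "-1"] that n by (simp add: pos_le_divide_eq mult_ac)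
qed

end
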